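(* Let $n\ge 1$ be an integer. (1) If $n$ is odd, let $m=3(n+1)$ and $S=\{1,\dots,\frac{n+1}{2}\}\cup\{\frac{3(n+1)}{2}+1,\dots,2n+1\}$. (2) If $n$ is even, let $m=3n+2$ and $S=\{1,\dots,\frac{n}{2}\}\cup\{\frac{3n+2}{2}+1,\dots,2n+1\}$. In either case let $D_n$ be the mixed graph on vertex set $\mathbb{Z}_m$ whose arcs are $(i,i+s)$ for all $i\in\mathbb{Z}_m$, $s\in S$, and whose edges are $\{i,i+m/2\}$ for all $i\in\mathbb{Z}_m$ (edges joining antipodal vertices). Then $D_n$ is $n$-arc-regular (every vertex is the tail of exactly $n$ arcs and the head of exactly $n$ arcs), $1$-edge-regular, and has girth $4$.
   Context: A mixed graph is a finite simple graph that may contain both edges and arcs. Walks traverse edges in either direction and arcs only in their direction; a cycle is a closed walk with no repeated vertices (other than start = end) and no repeated edge or arc; the girth is the length of a shortest cycle. *)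

theory Defs
  imports Main "HOL-Library.Extended_Nat"
begin

datatype 'a link = Arc 'a 'a | Edge "'a set"

definition link_step :: "('a \<times> 'a) set \<Rightarrow> 'a set set \<Rightarrow> 'a \<Rightarrow> 'a link \<Rightarrow> 'a \<Rightarrow> bool" where
  "link_step A E x l y \<longleftrightarrow>
     (l = Arc x y \<and> (x, y) \<in> A) \<or> (l = Edge {x, y} \<and> {x, y} \<in> E)"

definition mixed_walk :: "'a set \<Rightarrow> ('a \<times> 'a) set \<Rightarrow> 'a set set \<Rightarrow> 'a list \<Rightarrow> 'a link list \<Rightarrow> bool" where
  "mixed_walk V A E vs ls \<longleftrightarrow>
     length vs = Suc (length ls) \<and> set vs \<subseteq> V \<and>
     (\<forall>i < length ls. link_step A E (vs ! i) (ls ! i) (vs ! Suc i))"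

definition mixed_cycle :: "'a set \<Rightarrow> ('a \<times> 'a) set \<Rightarrow> 'a set set \<Rightarrow> 'a list \<Rightarrow> 'a link list \<Rightarrow> bool" where
  "mixed_cycle V A E vs ls \<longleftrightarrow>
     mixed_walk V A E vs ls \<and> ls \<noteq> [] \<and> hd vs = last vs \<and>
     distinct (tl vs) \<and> distinct ls"

text \<open>Girth: length of a shortest cycle (infinity if there is no cycle).\<close>
definition mixed_girth :: "'a set \<Rightarrow> ('a \<times> 'a) set \<Rightarrow> 'a set set \<Rightarrow> enat" where
  "mixed_girth V A E = (INF p \<in> {(vs, ls). mixed_cycle V A E vs ls}. enat (length (snd p)))"

definition arc_regular :: "'a set \<Rightarrow> ('a \<times> 'a) set \<Rightarrow> nat \<Rightarrow> bool" where
  "arc_regular V A z \<longleftrightarrow>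
     (\<forall>v \<in> V. card {w. (v, w) \<in> A} = z \<and> card {u. (u, v) \<in> A} = z)"

definition edge_regular :: "'a set \<Rightarrow> 'a set set \<Rightarrow> nat \<Rightarrow> bool" where
  "edge_regular V E r \<longleftrightarrow> (\<forall>v \<in> V. card {w. {v, w} \<in> E} = r)"

text \<open>The graph D_n on Z_m, with Z_m represented by {0..<m} and arithmetic mod m.\<close>
definition D_m :: "nat \<Rightarrow> nat" where
  "D_m n = (if odd n then 3 * (n + 1) else 3 * n + 2)"

definition D_S :: "nat \<Rightarrow> nat set" where
  "D_S n = (if odd n
     then {1 .. (n + 1) div 2} \<union> {3 * (n + 1) div 2 + 1 .. 2 * n + 1}
     else {1 .. n div 2} \<union> {(3 * n + 2) div 2 + 1 .. 2 * n + 1})"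

definition D_V :: "nat \<Rightarrow> nat set" where
  "D_V n = {0 ..< D_m n}"

definition D_A :: "nat \<Rightarrow> (nat \<times> nat) set" where
  "D_A n = {(i, (i + s) mod D_m n) | i s. i < D_m n \<and> s \<in> D_S n}"

definition D_E :: "nat \<Rightarrow> nat set set" where
  "D_E n = {{i, (i + D_m n div 2) mod D_m n} | i. i < D_m n}"

end

theory Submission
  imports Defs "HOL-Number_Theory.Cong"
begin

text \<open>\<open>D\<^sub>n\<close> is a circulant mixed graph on \<open>\<int>\<^sub>m\<close> with connection set \<open>S \<subseteq> \<int>\<^sub>m - {0, m/2}\<close>:
  the out-neighbours of \<open>v\<close> are \<open>v + S\<close>, the in-neighbours \<open>v - S\<close>, and the antipodal edges form
  a perfect matching, so \<open>D\<^sub>n\<close> is \<open>|S|\<close>-arc-regular and 1-edge-regular. Along a cycle of length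
  \<open>k \<le> 3\<close> the steps are elements of \<open>S \<union> {m/2}\<close> summing to \<open>0\<close> modulo \<open>m\<close>. Two consecutive
  antipodal edges return to the start vertex, and \<open>S\<close> is chosen so that modulo \<open>m\<close> no two of its
  elements sum to \<open>0\<close> or \<open>m/2\<close> and no three sum to \<open>0\<close>; this excludes all such cycles. A 4-cycle is
  \<open>0, k, 2k, 3k = m/2, 0\<close> for odd \<open>n = 2k - 1\<close>, and \<open>0, 1, k + 1, 2k + 1, 0\<close> (steps
  \<open>1 + k + k + (4k + 1) = m\<close>) for even \<open>n = 2k\<close>.\<close>

lemma cong_less_triple_iff:
  fixes x c m :: nat
  assumes "x < 3 * m" "c < m"
  shows "[x = c] (mod m) \<longleftrightarrow> x = c \<or> x = c + m \<or> x = c + 2 * m"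
proof -
  define q r where "q = x div m" and "r = x mod m"
  have x: "x = q * m + r" and r: "r < m" and cong: "[x = c] (mod m) \<longleftrightarrow> r = c"
    using assms by (simp_all add: q_def r_def cong_def)
  have "q < 3" using assms by (simp add: q_def div_less_iff_less_mult)
  then have "q = 0 \<or> q = 1 \<or> q = 2" by auto
  then show ?thesis using x r cong assms(2) by auto
qed

lemma mod_add_mod_add_complement:
  fixes x a b m :: nat
  assumes "a + b = m"
  shows "((x + a) mod m + b) mod m = x mod m"
proof -
  have "((x + a) mod m + b) mod m = (x + m) mod m"
    by (simp add: mod_add_left_eq flip: assms add.assoc)
  then show ?thesis by simp
qed

lemma cong_add_half_iff:
  fixes x y m :: nat
  assumes "even m"
  shows "[x + m div 2 = y] (mod m) \<longleftrightarrow> [x = y + m div 2] (mod m)"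
proof -
  have "[x + m div 2 = y] (mod m) \<longleftrightarrow> [x + m div 2 + m div 2 = y + m div 2] (mod m)"
    by (rule cong_add_rcancel_nat [symmetric])
  also have "x + m div 2 + m div 2 = x + m" using assms by (auto elim: evenE)
  finally show ?thesis by (simp add: cong_def)
qed

lemma cong_add_half_twice:
  fixes x y z m :: nat
  assumes "even m" "[x + m div 2 = y] (mod m)" "[y + m div 2 = z] (mod m)"
  shows "[x = z] (mod m)"
  using assms cong_add_half_iff cong_trans by blast

definition circulant_arcs :: "nat \<Rightarrow> nat set \<Rightarrow> (nat \<times> nat) set" where
  "circulant_arcs m S = {(i, (i + s) mod m) | i s. i < m \<and> s \<in> S}"

definition antipodal_edges :: "nat \<Rightarrow> nat set set" where
  "antipodal_edges m = {{i, (i + m div 2) mod m} | i. i < m}"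

lemma mem_circulant_arcs_iff:
  "(x, y) \<in> circulant_arcs m S \<longleftrightarrow> x < m \<and> (\<exists>s\<in>S. y = (x + s) mod m)"
  by (auto simp: circulant_arcs_def)

lemma mem_antipodal_edges_iff:
  assumes "even m"
  shows "{x, y} \<in> antipodal_edges m \<longleftrightarrow> x < m \<and> y = (x + m div 2) mod m"
proof
  assume "{x, y} \<in> antipodal_edges m"
  then obtain i where i: "i < m" "{x, y} = {i, (i + m div 2) mod m}"
    by (auto simp: antipodal_edges_def)
  have antipode: "((i + m div 2) mod m + m div 2) mod m = i"
    using mod_add_mod_add_complement[of "m div 2" "m div 2" m i] assms i(1) by (auto elim: evenE)
  from i(2) have "x = i \<and> y = (i + m div 2) mod m \<or> x = (i + m div 2) mod m \<and> y = i"
    by (auto simp: doubleton_eq_iff)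
  then show "x < m \<and> y = (x + m div 2) mod m"
    using i(1) antipode by auto
next
  assume "x < m \<and> y = (x + m div 2) mod m"
  then show "{x, y} \<in> antipodal_edges m" by (auto simp: antipodal_edges_def)
qed

lemma inj_on_add_mod:
  fixes v m :: nat
  assumes "S \<subseteq> {..<m}"
  shows "inj_on (\<lambda>s. (v + s) mod m) S"
proof (rule inj_onI)
  fix s t assume "s \<in> S" "t \<in> S" "(v + s) mod m = (v + t) mod m"
  then show "s = t"
    using assms cong_add_lcancel_nat[of v s t m] cong_less_modulus_unique_nat[of s t m]
    by (auto simp: cong_def)
qed

lemma out_neighbours_circulant:
  "v < m \<Longrightarrow> {w. (v, w) \<in> circulant_arcs m S} = (\<lambda>s. (v + s) mod m) ` S"
  by (auto simp: mem_circulant_arcs_iff)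

lemma in_neighbours_circulant:
  assumes "v < m" "S \<subseteq> {..m}"
  shows "{u. (u, v) \<in> circulant_arcs m S} = (\<lambda>s. (v + (m - s)) mod m) ` S"
proof (intro set_eqI iffI)
  fix u assume "u \<in> {u. (u, v) \<in> circulant_arcs m S}"
  then obtain s where "u < m" "s \<in> S" "v = (u + s) mod m"
    by (auto simp: mem_circulant_arcs_iff)
  moreover have "s + (m - s) = m" using \<open>s \<in> S\<close> assms(2) by auto
  ultimately have "u = (v + (m - s)) mod m"
    using mod_add_mod_add_complement[of s "m - s" m u] by simp
  then show "u \<in> (\<lambda>s. (v + (m - s)) mod m) ` S" using \<open>s \<in> S\<close> by blast
next
  fix u assume "u \<in> (\<lambda>s. (v + (m - s)) mod m) ` S"
  then obtain s where "s \<in> S" "u = (v + (m - s)) mod m" by blast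
  moreover have "m - s + s = m" using \<open>s \<in> S\<close> assms(2) by auto
  ultimately have "u < m" "v = (u + s) mod m"
    using mod_add_mod_add_complement[of "m - s" s m v] assms(1) by simp_all
  then show "u \<in> {u. (u, v) \<in> circulant_arcs m S}"
    using \<open>s \<in> S\<close> by (auto simp: mem_circulant_arcs_iff)
qed

lemma arc_regular_circulant:
  assumes "S \<subseteq> {..<m}"
  shows "arc_regular {0..<m} (circulant_arcs m S) (card S)"
  unfolding arc_regular_def
proof
  fix v assume "v \<in> {0..<m}"
  then have v: "v < m" by simp
  define source where "source = (\<lambda>s. (v + (m - s)) mod m)"
  have "inj_on source S"
  proof (rule inj_onI)
    fix s t assume st: "s \<in> S" "t \<in> S" "source s = source t"
    have "(source r + r) mod m = v" if "r \<in> S" for r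
      using that assms v mod_add_mod_add_complement[of "m - r" r m v]
      by (auto simp: source_def)
    then have "(source s + s) mod m = (source s + t) mod m" using st by metis
    then show "s = t" using inj_on_add_mod[OF assms, of "source s"] st(1,2) by (auto dest: inj_onD)
  qed
  moreover have "{u. (u, v) \<in> circulant_arcs m S} = source ` S"
    unfolding source_def using assms by (intro in_neighbours_circulant[OF v]) auto
  ultimately show "card {w. (v, w) \<in> circulant_arcs m S} = card S \<and>
             card {u. (u, v) \<in> circulant_arcs m S} = card S"
    using inj_on_add_mod[OF assms, of v] by (simp add: out_neighbours_circulant[OF v] card_image)
qed

lemma edge_regular_antipodal:
  assumes "even m" "0 < m"
  shows "edge_regular {0..<m} (antipodal_edges m) 1"
  unfolding edge_regular_def
proof
  fix v assume "v \<in> {0..<m}"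
  then have "{w. {v, w} \<in> antipodal_edges m} = {(v + m div 2) mod m}"
    by (auto simp: mem_antipodal_edges_iff[OF assms(1)])
  then show "card {w. {v, w} \<in> antipodal_edges m} = 1" by simp
qed

lemma link_step_antipodal_circulant:
  assumes "link_step (circulant_arcs m S) (antipodal_edges m) x l y" "even m"
  obtains d where "x < m" "y < m" "[x + d = y] (mod m)" "d \<in> S \<or> d = m div 2 \<and> l = Edge {x, y}"
proof -
  from assms(1) consider "(x, y) \<in> circulant_arcs m S" | "l = Edge {x, y}" "{x, y} \<in> antipodal_edges m"
    unfolding link_step_def by blast
  then show thesis
  proof cases
    case 1
    then obtain s where "x < m" "s \<in> S" "y = (x + s) mod m" by (auto simp: mem_circulant_arcs_iff)
    then show thesis using that[of s] by (simp add: cong_def)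
  next
    case 2
    then have "x < m" "y = (x + m div 2) mod m" by (simp_all add: mem_antipodal_edges_iff[OF assms(2)])
    then show thesis using 2(1) that[of "m div 2"] by (simp add: cong_def)
  qed
qed

lemma mixed_cycle_length_1:
  assumes "mixed_cycle V A E vs ls" "length ls = 1"
  obtains a l where "link_step A E a l a"
proof -
  obtain a b where "vs = [a, b]"
    using assms by (auto simp: mixed_cycle_def mixed_walk_def length_Suc_conv)
  then show thesis using assms that by (auto simp: mixed_cycle_def mixed_walk_def)
qed

lemma mixed_cycle_length_2:
  assumes "mixed_cycle V A E vs ls" "length ls = 2"
  obtains a b l1 l2 where "l1 \<noteq> l2" "link_step A E a l1 b" "link_step A E b l2 a"
proof -
  obtain a b c where "vs = [a, b, c]"
    using assms by (auto simp: mixed_cycle_def mixed_walk_def length_Suc_conv numeral_eq_Suc)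
  moreover obtain l1 l2 where "ls = [l1, l2]"
    using assms(2) by (auto simp: length_Suc_conv numeral_eq_Suc)
  ultimately show thesis using assms that by (auto simp: mixed_cycle_def mixed_walk_def All_less_Suc2)
qed

lemma mixed_cycle_length_3:
  assumes "mixed_cycle V A E vs ls" "length ls = 3"
  obtains a b c l1 l2 l3
  where "distinct [a, b, c]" "link_step A E a l1 b" "link_step A E b l2 c" "link_step A E c l3 a"
proof -
  obtain a b c d where "vs = [a, b, c, d]"
    using assms by (auto simp: mixed_cycle_def mixed_walk_def length_Suc_conv numeral_eq_Suc)
  moreover obtain l1 l2 l3 where "ls = [l1, l2, l3]"
    using assms(2) by (auto simp: length_Suc_conv numeral_eq_Suc)
  ultimately show thesis using assms that by (auto simp: mixed_cycle_def mixed_walk_def All_less_Suc2)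
qed

lemma mixed_girth_eqI:
  assumes "mixed_cycle V A E vs ls"
    and "\<And>vs' ls'. mixed_cycle V A E vs' ls' \<Longrightarrow> length ls \<le> length ls'"
  shows "mixed_girth V A E = length ls"
  unfolding mixed_girth_def
proof (rule antisym)
  show "(INF p \<in> {(vs, ls). mixed_cycle V A E vs ls}. enat (length (snd p))) \<le> length ls"
    using assms(1) by (force intro: INF_lower2)
  show "enat (length ls) \<le> (INF p \<in> {(vs, ls). mixed_cycle V A E vs ls}. enat (length (snd p)))"
    using assms(2) by (force intro: INF_greatest)
qed

locale antipodal_circulant =
  fixes m :: nat and S :: "nat set"
  assumes even_modulus: "even m"
    and connection_set: "S \<subseteq> {1..<m} - {m div 2}"
    and pair_sums: "\<And>s t. s \<in> S \<Longrightarrow> t \<in> S \<Longrightarrow>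
      [s + t \<noteq> 0] (mod m) \<and> [s + t \<noteq> m div 2] (mod m)"
    and triple_sums: "\<And>s t u. s \<in> S \<Longrightarrow> t \<in> S \<Longrightarrow> u \<in> S \<Longrightarrow> [s + t + u \<noteq> 0] (mod m)"
begin

abbreviation arcs :: "(nat \<times> nat) set" where
  "arcs \<equiv> circulant_arcs m S"

abbreviation edges :: "nat set set" where
  "edges \<equiv> antipodal_edges m"

lemma shift_not_cong_0:
  assumes "0 < m" "d \<in> S \<or> d = m div 2"
  shows "[d \<noteq> 0] (mod m)"
proof -
  have "0 < d" "d < m" using assms connection_set even_modulus by (auto elim: evenE)
  then show ?thesis using cong_less_modulus_unique_nat[of d 0 m] by auto
qed

lemma not_cong_add_half_0:
  assumes "s \<in> S"
  shows "[s + m div 2 \<noteq> 0] (mod m)"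
proof
  assume "[s + m div 2 = 0] (mod m)"
  then have "[s = m div 2] (mod m)" using cong_add_half_iff[OF even_modulus] by simp
  moreover have "s < m" "m div 2 < m" using assms connection_set by auto
  ultimately show False using assms connection_set cong_less_modulus_unique_nat by blast
qed

lemma no_loop: "\<not> link_step arcs edges a l a"
proof
  assume "link_step arcs edges a l a"
  then obtain d where "a < m" "[a + d = a] (mod m)" "d \<in> S \<or> d = m div 2"
    using link_step_antipodal_circulant[OF _ even_modulus] by metis
  then show False using shift_not_cong_0 cong_add_lcancel_0_nat by (metis gr_zeroI not_less0)
qed

lemma no_digon:
  assumes "link_step arcs edges a l1 b" "link_step arcs edges b l2 a"
  shows "l1 = l2"
proof -
  obtain d1 d2 where d: "[a + d1 = b] (mod m)" "[b + d2 = a] (mod m)"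
    and d1: "d1 \<in> S \<or> d1 = m div 2 \<and> l1 = Edge {a, b}"
    and d2: "d2 \<in> S \<or> d2 = m div 2 \<and> l2 = Edge {b, a}"
    using assms link_step_antipodal_circulant[OF _ even_modulus] by metis
  have "[a + (d1 + d2) = (a + d1) + d2] (mod m)" by (simp add: ac_simps)
  also have "[(a + d1) + d2 = b + d2] (mod m)" using d(1) by (intro cong_add cong_refl)
  also have "[b + d2 = a] (mod m)" by (fact d(2))
  finally have sum: "[d1 + d2 = 0] (mod m)" by (simp add: cong_add_lcancel_0_nat)
  show ?thesis
  proof (cases "d1 \<in> S"; cases "d2 \<in> S")
    assume "d1 \<in> S" "d2 \<in> S"
    then show ?thesis using sum pair_sums by blast
  next
    assume "d1 \<in> S" "d2 \<notin> S"
    then show ?thesis using sum d2 not_cong_add_half_0 by blast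
  next
    assume "d1 \<notin> S" "d2 \<in> S"
    then show ?thesis using sum d1 not_cong_add_half_0 by (metis add.commute)
  next
    assume "d1 \<notin> S" "d2 \<notin> S"
    then show ?thesis using d1 d2 by (simp add: insert_commute)
  qed
qed

lemma no_triangle:
  assumes "link_step arcs edges a l1 b" "link_step arcs edges b l2 c" "link_step arcs edges c l3 a"
  shows "\<not> distinct [a, b, c]"
proof
  assume distinct: "distinct [a, b, c]"
  obtain d1 d2 d3 where "a < m" "b < m" "c < m"
    and d: "[a + d1 = b] (mod m)" "[b + d2 = c] (mod m)" "[c + d3 = a] (mod m)"
    and ds: "d1 \<in> S \<or> d1 = m div 2" "d2 \<in> S \<or> d2 = m div 2" "d3 \<in> S \<or> d3 = m div 2"
    using assms link_step_antipodal_circulant[OF _ even_modulus] by metis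
  have "[a + (d1 + d2 + d3) = (a + d1) + d2 + d3] (mod m)" by (simp add: ac_simps)
  also have "[(a + d1) + d2 + d3 = b + d2 + d3] (mod m)" using d(1) by (intro cong_add cong_refl)
  also have "[b + d2 + d3 = c + d3] (mod m)" using d(2) by (intro cong_add cong_refl)
  also have "[c + d3 = a] (mod m)" by (fact d(3))
  finally have sum: "[d1 + d2 + d3 = 0] (mod m)" by (simp add: cong_add_lcancel_0_nat)
  have "x = z" if "[x + m div 2 = y] (mod m)" "[y + m div 2 = z] (mod m)" "x < m" "z < m" for x y z
    using that cong_add_half_twice[OF even_modulus] cong_less_modulus_unique_nat by blast
  then have "d1 \<in> S \<or> d2 \<in> S" "d2 \<in> S \<or> d3 \<in> S" "d3 \<in> S \<or> d1 \<in> S"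
    using distinct ds d \<open>a < m\<close> \<open>b < m\<close> \<open>c < m\<close> by (metis distinct_length_2_or_more)+
  then consider "d1 \<in> S" "d2 \<in> S" | "d2 \<in> S" "d3 \<in> S" | "d3 \<in> S" "d1 \<in> S" by blast
  then obtain s t d where "s \<in> S" "t \<in> S" "d \<in> S \<or> d = m div 2" "[s + t + d = 0] (mod m)"
    using sum ds by cases (metis add.commute add.left_commute)+
  then show False
    using pair_sums triple_sums cong_add_half_iff[OF even_modulus, of "s + t" 0] by auto
qed

lemma cycle_length_ge_4:
  assumes "mixed_cycle V arcs edges vs ls"
  shows "4 \<le> length ls"
proof (rule ccontr)
  assume "\<not> 4 \<le> length ls"
  moreover have "length ls \<noteq> 0" using assms by (simp add: mixed_cycle_def)
  ultimately have "length ls = 1 \<or> length ls = 2 \<or> length ls = 3" by linarith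
  then show False
    using mixed_cycle_length_1[OF assms] mixed_cycle_length_2[OF assms]
      mixed_cycle_length_3[OF assms] no_loop no_digon no_triangle
    by metis
qed

lemma mixed_girth_eq_4:
  assumes "mixed_cycle V arcs edges vs ls" "length ls = 4"
  shows "mixed_girth V arcs edges = 4"
  using mixed_girth_eqI[OF assms(1)] cycle_length_ge_4 assms(2) by (simp add: numeral_eq_enat)

end

lemma D_A_eq: "D_A n = circulant_arcs (D_m n) (D_S n)"
  by (simp add: D_A_def circulant_arcs_def)

lemma D_E_eq: "D_E n = antipodal_edges (D_m n)"
  by (simp add: D_E_def antipodal_edges_def)

lemma D_odd:
  assumes "n + 1 = 2 * k"
  shows "D_m n = 6 * k" "D_S n = {1..k} \<union> {3 * k + 1..<4 * k}"
proof -
  have "odd n" using assms by presburger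
  moreover have "{3 * k + 1..2 * n + 1} = {3 * k + 1..<4 * k}" using assms by auto
  ultimately show "D_m n = 6 * k" "D_S n = {1..k} \<union> {3 * k + 1..<4 * k}"
    using assms by (simp_all add: D_m_def D_S_def)
qed

lemma D_even:
  assumes "n = 2 * k"
  shows "D_m n = 6 * k + 2" "D_S n = {1..k} \<union> {3 * k + 2..<4 * k + 2}"
proof -
  have "even n" using assms by presburger
  moreover have "{3 * k + 2..2 * n + 1} = {3 * k + 2..<4 * k + 2}" using assms by auto
  ultimately show "D_m n = 6 * k + 2" "D_S n = {1..k} \<union> {3 * k + 2..<4 * k + 2}"
    using assms by (simp_all add: D_m_def D_S_def)
qed

lemma antipodal_circulant_odd: "antipodal_circulant (6 * k) ({1..k} \<union> {3 * k + 1..<4 * k})"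
proof (unfold_locales, goal_cases)
  case (3 s t)
  then have "s + t < 3 * (6 * k)" "0 < 6 * k" "3 * k < 6 * k" by auto
  then show ?case using 3 by (auto simp: cong_less_triple_iff)
next
  case (4 s t u)
  then have "s + t + u < 3 * (6 * k)" "0 < 6 * k" by auto
  then show ?case using 4 by (auto simp: cong_less_triple_iff)
qed auto

lemma antipodal_circulant_even:
  "antipodal_circulant (6 * k + 2) ({1..k} \<union> {3 * k + 2..<4 * k + 2})"
proof (unfold_locales, goal_cases)
  case (3 s t)
  then have "s + t < 3 * (6 * k + 2)" "3 * k + 1 < 6 * k + 2" by auto
  then show ?case using 3 by (auto simp: cong_less_triple_iff)
next
  case (4 s t u)
  then have "s + t + u < 3 * (6 * k + 2)" by auto
  then show ?case using 4 by (auto simp: cong_less_triple_iff)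
qed auto

lemma four_cycle_odd:
  assumes "1 \<le> k"
  shows "mixed_cycle {0..<6 * k} (circulant_arcs (6 * k) ({1..k} \<union> {3 * k + 1..<4 * k}))
    (antipodal_edges (6 * k)) [0, k, 2 * k, 3 * k, 0]
    [Arc 0 k, Arc k (2 * k), Arc (2 * k) (3 * k), Edge {3 * k, 0}]"
  using assms
  by (auto simp: mixed_cycle_def mixed_walk_def link_step_def mem_circulant_arcs_iff
      mem_antipodal_edges_iff All_less_Suc2 intro!: bexI[of _ k])

lemma four_cycle_even:
  assumes "1 \<le> k"
  shows "mixed_cycle {0..<6 * k + 2}
    (circulant_arcs (6 * k + 2) ({1..k} \<union> {3 * k + 2..<4 * k + 2})) (antipodal_edges (6 * k + 2)) [0, 1, k + 1, 2 * k + 1, 0]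
    [Arc 0 1, Arc 1 (k + 1), Arc (k + 1) (2 * k + 1), Arc (2 * k + 1) 0]"
proof -
  have "(2 * k + 1 + (4 * k + 1)) mod (6 * k + 2) = 0" by simp
  then show ?thesis
    using assms
    by (auto simp: mixed_cycle_def mixed_walk_def link_step_def mem_circulant_arcs_iff
        All_less_Suc2 intro: bexI[of _ 1] bexI[of _ k] bexI[of _ "4 * k + 1"])
qed

lemma D_antipodal_circulant:
  assumes "n \<ge> 1"
  shows "antipodal_circulant (D_m n) (D_S n) \<and> card (D_S n) = n \<and>
    (\<exists>vs ls. mixed_cycle (D_V n) (D_A n) (D_E n) vs ls \<and> length ls = 4)"
proof (cases "odd n")
  case True
  then obtain j where "n = 2 * j + 1" by (rule oddE)
  then obtain k where k: "n + 1 = 2 * k" "1 \<le> k" by (intro that[of "j + 1"]) simp_all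
  have "card ({1..k} \<union> {3 * k + 1..<4 * k}) = n" using k by (subst card_Un_disjoint) auto
  then show ?thesis using D_odd[OF k(1)] antipodal_circulant_odd four_cycle_odd[OF k(2)]
    unfolding D_V_def D_A_eq D_E_eq by (auto intro!: exI)
next
  case False
  then obtain k where k: "n = 2 * k" "1 \<le> k" using assms by (auto elim: evenE)
  have "card ({1..k} \<union> {3 * k + 2..<4 * k + 2}) = n" using k by (subst card_Un_disjoint) auto
  then show ?thesis using D_even[OF k(1)] antipodal_circulant_even four_cycle_even[OF k(2)]
    unfolding D_V_def D_A_eq D_E_eq by (auto intro!: exI)
qed

theorem lemma8:
  fixes n :: nat
  assumes "n \<ge> 1"
  shows "arc_regular (D_V n) (D_A n) n \<and> edge_regular (D_V n) (D_E n) 1 \<and>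
         mixed_girth (D_V n) (D_A n) (D_E n) = 4"
proof -
  obtain vs ls where D: "antipodal_circulant (D_m n) (D_S n)" "card (D_S n) = n"
    and cycle: "mixed_cycle (D_V n) (D_A n) (D_E n) vs ls" "length ls = 4"
    using D_antipodal_circulant[OF assms] by blast
  have "D_S n \<subseteq> {..<D_m n}" "even (D_m n)" "0 < D_m n"
    using antipodal_circulant.connection_set[OF D(1)] antipodal_circulant.even_modulus[OF D(1)]
    by (auto simp: D_m_def)
  then have "arc_regular (D_V n) (D_A n) n" "edge_regular (D_V n) (D_E n) 1"
    using arc_regular_circulant[of "D_S n" "D_m n"] edge_regular_antipodal D(2)
    by (simp_all add: D_V_def D_A_eq D_E_eq)
  moreover have "mixed_girth (D_V n) (D_A n) (D_E n) = 4"
    using antipodal_circulant.mixed_girth_eq_4[OF D(1)] cycle by (simp add: D_A_eq D_E_eq)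
  ultimately show ?thesis by blast
qed

end
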